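(* For $(\mu_0^2,\mu_1^2,\mu_\infty^2)\in[0,1)^3$ put $s=\mu_0^2+\mu_1^2+\mu_\infty^2$ and $t=\mu_0^2\mu_1^2+\mu_1^2\mu_\infty^2+\mu_\infty^2\mu_0^2$. The domain in the $(s,t)$-plane of all such points $(s,t)$ is the region bounded by the curves \[ t=\frac{s^2}{3},\quad t=0,\quad t=s-1,\quad t=2s-3, \] (i.e. its closure is $\{(s,t): 0\le s\le 3,\ \max(0,s-1,2s-3)\le t\le s^2/3\}$), and it is divided into two parts by the curve $D=0$, where $D=(s+1)^2-4(t+1)$.
   Context: $D$ equals the discriminant $(\mu_\infty^2+\mu_0^2-\mu_1^2-1)^2-4(1-\mu_0^2)(1-\mu_\infty^2)$ of the numerator $(1-\mu_\infty^2)x^2+(\mu_\infty^2+\mu_0^2-\mu_1^2-1)x+1-\mu_0^2$ of the coefficient $q$ of the SL-form of the hypergeometric equation. *)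

theory Defs
  imports "HOL-Analysis.Analysis"
begin

text \<open>The map (mu0^2, mu1^2, muinf^2) to (s,t); variables a b c stand for the squares.\<close>
definition st_map :: "real \<times> real \<times> real \<Rightarrow> real \<times> real" where
  "st_map = (\<lambda>(a, b, c). (a + b + c, a * b + b * c + c * a))"

definition st_domain :: "(real \<times> real) set" where
  "st_domain = st_map ` ({0..<1} \<times> {0..<1} \<times> {0..<1})"

definition Dst :: "real \<times> real \<Rightarrow> real" where
  "Dst = (\<lambda>(s, t). (s + 1)^2 - 4 * (t + 1))"

end

theory Submission
  imports Defs
begin

(* Writing s = a + b + c and t = ab + bc + ca, the identities
     t - (s - 1) = (1 - a)(1 - b)(1 - c) + abc,
     t - (2s - 3) = (1 - a)(1 - b) + (1 - b)(1 - c) + (1 - c)(1 - a),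
     2 (s^2 - 3t) = (a - b)^2 + (b - c)^2 + (c - a)^2
   show that the closed cube [0,1]^3 is mapped into the region, with strict inequalities
   s < 3, t > s - 1, t > 2s - 3 on [0,1)^3. Conversely each point of the region is the
   image of a triple (x, y, 0) or (x, x, z) in the closed cube, whose coordinates are read
   off from a square root. As the closed cube is compact, its image is the closure.

   On the domain, D > 0 forces 1 < s < 3, so this part is exactly the set strictly between
   the graphs t = max(s - 1, 2s - 3) and t = ((s + 1)^2 - 4)/4 over 1 < s < 3, which is
   connected. The part D < 0 is the image of a star-shaped subset of [0,1)^3: scaling
   (a, b, c) by u moves (s, t) to (us, u^2 t), and
     D(us, u^2 t) = u^2 D(s, t) + (1 - u)(2us - 3 - 3u)
   with 2us - 3 - 3u <= 0 when s <= 3. The open sets D < 0 and D > 0 separate the two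
   parts, so they are the two components. *)

lemma connected_between_graphs:
  fixes f g :: "real \<Rightarrow> real"
  assumes "connected I" "continuous_on I f" "continuous_on I g" "\<And>x. x \<in> I \<Longrightarrow> f x < g x"
  shows "connected {(x, y). x \<in> I \<and> f x < y \<and> y < g x}"
proof -
  define h where "h = (\<lambda>z. (fst z, f (fst z) + snd z * (g (fst z) - f (fst z))))"
  have "continuous_on (I \<times> {0<..<1}) h" unfolding h_def
    by (intro continuous_intros continuous_on_compose2[OF assms(2)]
        continuous_on_compose2[OF assms(3)]) auto
  moreover have "h ` (I \<times> {0<..<1}) = {(x, y). x \<in> I \<and> f x < y \<and> y < g x}"
  proof
    show "h ` (I \<times> {0<..<1}) \<subseteq> {(x, y). x \<in> I \<and> f x < y \<and> y < g x}"
    proof (rule image_subsetI)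
      fix z :: "real \<times> real" assume "z \<in> I \<times> {0<..<1}"
      then obtain x l where z: "z = (x, l)" "x \<in> I" "l \<in> {0<..<1}" by blast
      then have "0 < l * (g x - f x)" "l * (g x - f x) < g x - f x"
        using assms(4)[of x] mult_strict_right_mono[of l 1 "g x - f x"] by auto
      with z show "h z \<in> {(x, y). x \<in> I \<and> f x < y \<and> y < g x}"
        by (simp add: h_def)
    qed
    have "(x, y) \<in> h ` (I \<times> {0<..<1})" if "x \<in> I" "f x < y" "y < g x" for x y
    proof -
      have "h (x, (y - f x) / (g x - f x)) = (x, y)" and "(y - f x) / (g x - f x) \<in> {0<..<1}"
        using that by (auto simp: h_def)
      with \<open>x \<in> I\<close> show ?thesis by force
    qed
    then show "{(x, y). x \<in> I \<and> f x < y \<and> y < g x} \<subseteq> h ` (I \<times> {0<..<1})" by auto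
  qed
  ultimately show ?thesis
    using assms(1) by (metis connected_Ioo connected_Times connected_continuous_image)
qed

lemma connected_component_set_eq_open_part:
  assumes "open U" "open V" "U \<inter> V = {}" "S \<subseteq> U \<union> V" "connected (S \<inter> U)" "x \<in> S \<inter> U"
  shows "connected_component_set S x = S \<inter> U"
proof
  have "U \<inter> connected_component_set S x = {} \<or> V \<inter> connected_component_set S x = {}"
    using assms connected_component_subset[of S x]
    by (intro connectedD[OF connected_connected_component]) auto
  then show "connected_component_set S x \<subseteq> S \<inter> U"
    using assms connected_component_subset[of S x] connected_component_refl[of x S] by blast
  show "S \<inter> U \<subseteq> connected_component_set S x"
    using assms by (intro connected_component_maximal) auto
qed

lemma components_open_separation:
  assumes "open U" "open V" "U \<inter> V = {}" "S \<subseteq> U \<union> V"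
    and "connected (S \<inter> U)" "connected (S \<inter> V)" "S \<inter> U \<noteq> {}" "S \<inter> V \<noteq> {}"
  shows "components S = {S \<inter> U, S \<inter> V}"
proof -
  have U_part: "connected_component_set S x = S \<inter> U" if "x \<in> S \<inter> U" for x
    using assms that by (intro connected_component_set_eq_open_part) auto
  have V_part: "connected_component_set S x = S \<inter> V" if "x \<in> S \<inter> V" for x
    using assms that by (intro connected_component_set_eq_open_part) auto
  obtain u v where "u \<in> S \<inter> U" "v \<in> S \<inter> V" using assms(7,8) by blast
  then have "S \<inter> U \<in> connected_component_set S ` S" "S \<inter> V \<in> connected_component_set S ` S"
    using U_part V_part by (metis IntD1 image_eqI)+
  moreover have "connected_component_set S ` S \<subseteq> {S \<inter> U, S \<inter> V}"
    using U_part V_part assms(4) by blast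
  ultimately show ?thesis unfolding components_def by blast
qed

definition st_region :: "(real \<times> real) set" where
  "st_region = {(s, t). 0 \<le> s \<and> s \<le> 3 \<and> max 0 (max (s - 1) (2 * s - 3)) \<le> t \<and> t \<le> s^2 / 3}"

lemma st_map_apply [simp]: "st_map (a, b, c) = (a + b + c, a * b + b * c + c * a)"
  by (simp add: st_map_def)

lemma Dst_apply: "Dst (s, t) = (s + 1)^2 - 4 * (t + 1)"
  by (simp add: Dst_def)

lemma continuous_on_st_map: "continuous_on A st_map"
  unfolding st_map_def case_prod_unfold by (intro continuous_intros)

lemma continuous_on_Dst: "continuous_on A Dst"
  unfolding Dst_def case_prod_unfold by (intro continuous_intros)

lemma st_map_gap_identities:
  fixes a b c :: real
  shows "a * b + b * c + c * a - (a + b + c - 1) = (1 - a) * (1 - b) * (1 - c) + a * b * c"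
    and "a * b + b * c + c * a - (2 * (a + b + c) - 3) =
           (1 - a) * (1 - b) + (1 - b) * (1 - c) + (1 - c) * (1 - a)"
    and "2 * ((a + b + c)^2 - 3 * (a * b + b * c + c * a)) = (a - b)^2 + (b - c)^2 + (c - a)^2"
  by (simp_all add: algebra_simps power2_eq_square)

lemma st_map_cube_in_st_region:
  assumes "a \<in> {0..1}" "b \<in> {0..1}" "c \<in> {0..1}"
  shows "st_map (a, b, c) \<in> st_region"
proof -
  have "0 \<le> a * b + b * c + c * a - (a + b + c - 1)"
    unfolding st_map_gap_identities(1) using assms by simp
  moreover have "0 \<le> a * b + b * c + c * a - (2 * (a + b + c) - 3)"
    unfolding st_map_gap_identities(2) using assms by simp
  moreover have "0 \<le> 2 * ((a + b + c)^2 - 3 * (a * b + b * c + c * a))"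
    unfolding st_map_gap_identities(3) by simp
  moreover have "0 \<le> a * b + b * c + c * a"
    using assms by simp
  ultimately show ?thesis
    using assms by (auto simp: st_region_def)
qed

lemma st_map_half_open_cube_strict:
  fixes a b c :: real
  assumes "a \<in> {0..<1}" "b \<in> {0..<1}" "c \<in> {0..<1}"
  shows "a + b + c < 3" "a + b + c - 1 < a * b + b * c + c * a"
    and "2 * (a + b + c) - 3 < a * b + b * c + c * a"
proof -
  have "0 < a * b + b * c + c * a - (a + b + c - 1)"
    unfolding st_map_gap_identities(1) using assms
    by (intro add_pos_nonneg mult_pos_pos mult_nonneg_nonneg) auto
  moreover have "0 < a * b + b * c + c * a - (2 * (a + b + c) - 3)"
    unfolding st_map_gap_identities(2) using assms
    by (intro add_pos_pos mult_pos_pos) auto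
  ultimately show "a + b + c < 3" "a + b + c - 1 < a * b + b * c + c * a"
      "2 * (a + b + c) - 3 < a * b + b * c + c * a"
    using assms by auto
qed

lemma st_region_witness:
  fixes s t :: real
  assumes "0 \<le> s" "s \<le> 3" "0 \<le> t" "s - 1 \<le> t" "2 * s - 3 \<le> t" "t \<le> s^2 / 3"
  obtains a b c where "st_map (a, b, c) = (s, t)" "a \<in> {0..1}" "b \<in> {0..1}" "c \<in> {0..1}"
    and "\<lbrakk>s < 3; s - 1 < t; 2 * s - 3 < t\<rbrakk> \<Longrightarrow> a < 1 \<and> b < 1 \<and> c < 1"
proof (cases "s \<le> 2 \<and> t \<le> s^2 / 4")
  case True
  define r where "r = sqrt (s^2 - 4 * t)"
  have r: "0 \<le> r" "r^2 = s^2 - 4 * t" using True by (auto simp: r_def)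
  have sq: "(2 - s)^2 = s^2 - 4 * s + 4" by (simp add: power2_eq_square algebra_simps)
  have "r \<le> 2 - s" unfolding r_def using True assms sq by (intro real_le_lsqrt) linarith+
  moreover have "r < 2 - s" if "s - 1 < t" unfolding r_def using True that sq
    by (intro real_less_lsqrt) linarith+
  moreover have "r \<le> s" unfolding r_def using assms by (intro real_le_lsqrt) auto
  moreover have "st_map ((s + r) / 2, (s - r) / 2, 0) = (s, t)"
    using r by (simp add: power2_eq_square field_simps)
  ultimately show ?thesis using r by (intro that[of "(s + r) / 2" "(s - r) / 2" 0]) auto
next
  case False
  have t: "s^2 / 4 \<le> t"
  proof (cases "s \<le> 2")
    case False
    have "(s - 2) * (s - 6) \<le> 0" using False assms by (intro mult_nonneg_nonpos) auto
    then show ?thesis using assms by (simp add: power2_eq_square algebra_simps)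
  qed (use False in auto)
  define r where "r = sqrt (s^2 - 3 * t)"
  have r: "0 \<le> r" "r^2 = s^2 - 3 * t" using assms by (auto simp: r_def)
  have "r \<le> s / 2" unfolding r_def using assms t
    by (intro real_le_lsqrt) (auto simp: power_divide)
  moreover have sq: "(3 - s)^2 = s^2 - 6 * s + 9" by (simp add: power2_eq_square algebra_simps)
  then have "r \<le> 3 - s" unfolding r_def using assms by (intro real_le_lsqrt) linarith+
  moreover have "r < 3 - s" if "s < 3" "2 * s - 3 < t" unfolding r_def using that sq
    by (intro real_less_lsqrt) linarith+
  moreover have "st_map ((s + r) / 3, (s + r) / 3, (s - 2 * r) / 3) = (s, t)"
    using r by (simp add: power2_eq_square field_simps)
  ultimately show ?thesis using r
    by (intro that[of "(s + r) / 3" "(s + r) / 3" "(s - 2 * r) / 3"]) auto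
qed

lemma st_map_unit_cube_eq_st_region: "st_map ` ({0..1} \<times> {0..1} \<times> {0..1}) = st_region"
proof
  show "st_map ` ({0..1} \<times> {0..1} \<times> {0..1}) \<subseteq> st_region"
    using st_map_cube_in_st_region by (force simp del: st_map_apply)
  show "st_region \<subseteq> st_map ` ({0..1} \<times> {0..1} \<times> {0..1})"
  proof
    fix p assume "p \<in> st_region"
    then obtain s t where p: "p = (s, t)" and in_region: "0 \<le> s" "s \<le> 3" "0 \<le> t"
      "s - 1 \<le> t" "2 * s - 3 \<le> t" "t \<le> s^2 / 3"
      by (auto simp: st_region_def)
    obtain a b c where "st_map (a, b, c) = p" "a \<in> {0..1}" "b \<in> {0..1}" "c \<in> {0..1}"
      using st_region_witness[OF in_region] unfolding p by blast
    then show "p \<in> st_map ` ({0..1} \<times> {0..1} \<times> {0..1})" by force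
  qed
qed

lemma closure_st_domain: "closure st_domain = st_map ` ({0..1} \<times> {0..1} \<times> {0..1})"
proof
  have "compact (st_map ` ({0..1} \<times> {0..1} \<times> {0..1}))"
    by (intro compact_continuous_image continuous_on_st_map compact_Times) auto
  then show "closure st_domain \<subseteq> st_map ` ({0..1} \<times> {0..1} \<times> {0..1})"
    unfolding st_domain_def by (intro closure_minimal image_mono compact_imp_closed) auto
  have "closure ({0..<1} \<times> {0..<1} \<times> {0..<1}) =
          ({0..1} \<times> {0..1} \<times> {0..1} :: (real \<times> real \<times> real) set)"
    by (simp add: closure_Times)
  moreover have "st_map ` closure ({0..<1} \<times> {0..<1} \<times> {0..<1}) \<subseteq> closure st_domain"
    unfolding st_domain_def
    by (rule continuous_image_closure_subset[OF continuous_on_st_map order_refl])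
  ultimately show "st_map ` ({0..1} \<times> {0..1} \<times> {0..1}) \<subseteq> closure st_domain" by simp
qed

lemma st_domain_Dst_pos_bounds:
  assumes "(s, t) \<in> st_domain" "0 < Dst (s, t)"
  shows "1 < s" "s < 3" "max (s - 1) (2 * s - 3) < t" "t < ((s + 1)^2 - 4) / 4"
proof -
  obtain a b c where abc: "a \<in> {0..<1}" "b \<in> {0..<1}" "c \<in> {0..<1}"
    and st: "st_map (a, b, c) = (s, t)"
    using assms(1) unfolding st_domain_def by (auto simp del: st_map_apply)
  have "(s, t) \<in> st_region" unfolding st[symmetric] using abc by (intro st_map_cube_in_st_region) auto
  then have "0 \<le> s" "0 \<le> t" by (auto simp: st_region_def)
  show "s < 3" "max (s - 1) (2 * s - 3) < t"
    using st_map_half_open_cube_strict[OF abc] st by auto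
  show "t < ((s + 1)^2 - 4) / 4" using assms(2) by (simp add: Dst_apply)
  show "1 < s"
  proof (rule ccontr)
    assume "\<not> 1 < s"
    then have "(s + 1)^2 \<le> 2^2" using \<open>0 \<le> s\<close> by (intro power_mono) auto
    then show False using \<open>0 \<le> t\<close> \<open>t < ((s + 1)^2 - 4) / 4\<close> by simp
  qed
qed

lemma st_domain_Dst_pos_if_between:
  assumes s: "1 < s" "s < 3" and t: "max (s - 1) (2 * s - 3) < t" "t < ((s + 1)^2 - 4) / 4"
  shows "(s, t) \<in> st_domain" "0 < Dst (s, t)"
proof -
  have "((s + 1)^2 - 4) / 4 \<le> s^2 / 3"
    using zero_le_power2[of "s - 3"] by (simp add: power2_eq_square field_simps)
  then have in_region: "0 \<le> s" "s \<le> 3" "0 \<le> t" "s - 1 \<le> t" "2 * s - 3 \<le> t" "t \<le> s^2 / 3"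
    using s t by auto
  obtain a b c where abc: "st_map (a, b, c) = (s, t)" "a \<in> {0..1}" "b \<in> {0..1}" "c \<in> {0..1}"
    and strict: "\<lbrakk>s < 3; s - 1 < t; 2 * s - 3 < t\<rbrakk> \<Longrightarrow> a < 1 \<and> b < 1 \<and> c < 1"
    using st_region_witness[OF in_region] by blast
  have "(a, b, c) \<in> {0..<1} \<times> {0..<1} \<times> {0..<1}" using abc(2-4) strict s t by auto
  then show "(s, t) \<in> st_domain" unfolding st_domain_def abc(1)[symmetric] by (rule imageI)
  show "0 < Dst (s, t)" using t by (simp add: Dst_apply)
qed

lemma st_domain_Dst_pos_eq:
  "st_domain \<inter> {p. 0 < Dst p} =
     {(s, t). s \<in> {1<..<3} \<and> max (s - 1) (2 * s - 3) < t \<and> t < ((s + 1)^2 - 4) / 4}"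
proof (intro subset_antisym subsetI)
  fix p :: "real \<times> real"
  obtain s t where p: "p = (s, t)" by fastforce
  show "p \<in> {(s, t). s \<in> {1<..<3} \<and> max (s - 1) (2 * s - 3) < t \<and> t < ((s + 1)^2 - 4) / 4}"
    if "p \<in> st_domain \<inter> {p. 0 < Dst p}"
    using that st_domain_Dst_pos_bounds[of s t] unfolding p by simp
  show "p \<in> st_domain \<inter> {p. 0 < Dst p}"
    if "p \<in> {(s, t). s \<in> {1<..<3} \<and> max (s - 1) (2 * s - 3) < t \<and> t < ((s + 1)^2 - 4) / 4}"
    using that st_domain_Dst_pos_if_between[of s t] unfolding p by simp
qed

lemma connected_st_domain_Dst_pos: "connected (st_domain \<inter> {p. 0 < Dst p})"
  unfolding st_domain_Dst_pos_eq
proof (rule connected_between_graphs[of _ "\<lambda>s. max (s - 1) (2 * s - 3)" "\<lambda>s. ((s + 1)^2 - 4) / 4"])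
  fix s :: real assume "s \<in> {1<..<3}"
  then have "0 < (s - 1)^2" "0 < (s - 3)^2" by auto
  moreover have "((s + 1)^2 - 4) / 4 - (s - 1) = (s - 1)^2 / 4"
    and "((s + 1)^2 - 4) / 4 - (2 * s - 3) = (s - 3)^2 / 4"
    by (simp_all add: power2_eq_square field_simps)
  ultimately show "max (s - 1) (2 * s - 3) < ((s + 1)^2 - 4) / 4"
    unfolding max_less_iff_conj by linarith
next
  show "continuous_on {1<..<3::real} (\<lambda>s. max (s - 1) (2 * s - 3))"
    "continuous_on {1<..<3::real} (\<lambda>s. ((s + 1)^2 - 4) / 4)"
    by (intro continuous_intros; simp)+
qed simp

lemma origin_in_st_domain_Dst_neg: "(0, 0) \<in> st_domain \<inter> {p. Dst p < 0}"
proof -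
  have "st_map (0, 0, 0) \<in> st_domain" unfolding st_domain_def by (rule imageI) simp
  then show ?thesis by (simp add: Dst_apply)
qed

lemma Dst_scale:
  "Dst (u * s, u^2 * t) = u^2 * Dst (s, t) + (1 - u) * (2 * u * s - 3 * (1 + u))"
  by (simp add: Dst_apply power2_eq_square algebra_simps)

lemma Dst_scale_neg:
  fixes u s t :: real
  assumes "Dst (s, t) < 0" "0 \<le> u" "u \<le> 1" "s \<le> 3"
  shows "Dst (u * s, u^2 * t) < 0"
proof -
  have "u * s \<le> u * 3" using assms by (intro mult_left_mono)
  then have "(1 - u) * (2 * u * s - 3 * (1 + u)) \<le> 0" "u = 0 \<or> u^2 * Dst (s, t) < 0"
    using assms by (auto intro: mult_nonneg_nonpos mult_pos_neg)
  then show ?thesis unfolding Dst_scale by auto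
qed

lemma st_map_scaleR: "st_map (u *\<^sub>R x) = (u * fst (st_map x), u^2 * snd (st_map x))"
  by (cases x) (simp add: power2_eq_square algebra_simps)

lemma connected_st_domain_Dst_neg: "connected (st_domain \<inter> {p. Dst p < 0})"
proof -
  define N where "N = {x \<in> {0..<1} \<times> {0..<1} \<times> {0..<1}. Dst (st_map x) < 0}"
  have scaled: "u *\<^sub>R x \<in> N" if "x \<in> N" "0 \<le> u" "u \<le> 1" for x u
  proof -
    obtain a b c where x: "x = (a, b, c)" "a \<in> {0..<1}" "b \<in> {0..<1}" "c \<in> {0..<1}"
      and D: "Dst (st_map x) < 0"
      using \<open>x \<in> N\<close> by (auto simp: N_def)
    have "u * a \<in> {0..<1}" "u * b \<in> {0..<1}" "u * c \<in> {0..<1}"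
      using x that by (auto intro: mult_left_le_one_le order.strict_trans1)
    moreover have "fst (st_map x) \<le> 3"
      using st_map_half_open_cube_strict(1)[OF x(2-4)] x(1) by simp
    then have "Dst (st_map (u *\<^sub>R x)) < 0"
      unfolding st_map_scaleR using D that by (intro Dst_scale_neg) auto
    ultimately show "u *\<^sub>R x \<in> N" by (simp add: N_def x(1))
  qed
  have "starlike N" unfolding starlike_def
  proof (intro bexI ballI subsetI)
    show "0 \<in> N" by (simp add: N_def zero_prod_def Dst_apply)
    fix x y assume "x \<in> N" "y \<in> closed_segment 0 x"
    then show "y \<in> N" by (auto simp: in_segment intro: scaled)
  qed
  then have "connected N" by (rule starlike_imp_connected)
  moreover have "st_domain \<inter> {p. Dst p < 0} = st_map ` N" by (auto simp: st_domain_def N_def)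
  ultimately show ?thesis by (metis connected_continuous_image continuous_on_st_map)
qed

lemma components_st_domain_minus_Dst_zero:
  "components (st_domain - {p. Dst p = 0}) =
     {st_domain \<inter> {p. Dst p < 0}, st_domain \<inter> {p. 0 < Dst p}}"
proof -
  define S where "S = st_domain - {p. Dst p = 0}"
  have neg: "S \<inter> {p. Dst p < 0} = st_domain \<inter> {p. Dst p < 0}"
    and pos: "S \<inter> {p. 0 < Dst p} = st_domain \<inter> {p. 0 < Dst p}"
    by (auto simp: S_def)
  have "components S = {S \<inter> {p. Dst p < 0}, S \<inter> {p. 0 < Dst p}}"
  proof (rule components_open_separation)
    show "open {p. Dst p < 0}" "open {p. 0 < Dst p}"
      by (intro open_Collect_less continuous_on_Dst continuous_on_const)+
    show "{p. Dst p < 0} \<inter> {p. 0 < Dst p} = {}" "S \<subseteq> {p. Dst p < 0} \<union> {p. 0 < Dst p}"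
      by (auto simp: S_def)
    show "connected (S \<inter> {p. Dst p < 0})" "connected (S \<inter> {p. 0 < Dst p})"
      unfolding neg pos by (fact connected_st_domain_Dst_neg connected_st_domain_Dst_pos)+
    have "(2, 9/8) \<in> st_domain \<inter> {p. 0 < Dst p}" unfolding st_domain_Dst_pos_eq by simp
    then show "S \<inter> {p. Dst p < 0} \<noteq> {}" "S \<inter> {p. 0 < Dst p} \<noteq> {}"
      unfolding neg pos using origin_in_st_domain_Dst_neg by auto
  qed
  then show ?thesis unfolding neg pos by (simp only: S_def)
qed

theorem lemma2p4:
  shows "closure st_domain =
           {(s, t). 0 \<le> s \<and> s \<le> 3 \<and> max 0 (max (s - 1) (2 * s - 3)) \<le> t \<and> t \<le> s^2 / 3}
         \<and> card (components (st_domain - {p. Dst p = 0})) = 2"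
proof
  show "closure st_domain =
          {(s, t). 0 \<le> s \<and> s \<le> 3 \<and> max 0 (max (s - 1) (2 * s - 3)) \<le> t \<and> t \<le> s^2 / 3}"
    unfolding closure_st_domain st_map_unit_cube_eq_st_region st_region_def ..
  have "st_domain \<inter> {p. Dst p < 0} \<noteq> st_domain \<inter> {p. 0 < Dst p}"
    using origin_in_st_domain_Dst_neg by auto
  then show "card (components (st_domain - {p. Dst p = 0})) = 2"
    unfolding components_st_domain_minus_Dst_zero by simp
qed

end
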